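(* Let $k\ge2$, let $n$ be divisible by $k$, and consider the $n$-vertex bipartite construction with ratio $\rho$ and with parts $X,Y$ ($|X|=\rho n$), where all edges touching $X$ are red and all edges inside $Y$ are blue. Then: (1) writing $|Y|=qk+r$ with $0\le r<k$, the largest number of blue edges in a $K_k$-factor is $q\binom{k}{2}+\binom{r}{2}=\frac{k-1}{2}(1-\rho)n+O(1)$; (2) the largest number of red edges in a $K_k$-factor is $\left(\frac{k-1}{2}-\frac{k-\lfloor k\rho\rfloor-1}{2}\left(\frac{\lfloor k\rho\rfloor}{k}+1-2\rho\right)\right)n$.
   Context: A $K_k$-factor of $K_n$ ($k\mid n$) is a collection of $n/k$ vertex-disjoint copies of $K_k$ covering all vertices; its edges are the edges of these cliques. The bipartite construction with ratio $\rho$ is the red/blue-coloring of $K_n$ with vertex partition $X\cup Y$, $|X|=\rho n$, in which all edges touching $X$ get one color and all edges inside $Y$ get the other color. *)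

theory Defs
  imports Complex_Main
begin

text \<open>The complete graph on the finite vertex set V. A K_k-factor is a partition of V
  into blocks of exactly k vertices (each block spans a copy of K_k).\<close>
definition Kk_factor :: "nat \<Rightarrow> 'a set \<Rightarrow> 'a set set \<Rightarrow> bool" where
  "Kk_factor k V P \<longleftrightarrow>
     (\<forall>B\<in>P. B \<subseteq> V \<and> card B = k) \<and>
     (\<forall>B\<in>P. \<forall>C\<in>P. B \<noteq> C \<longrightarrow> B \<inter> C = {}) \<and>
     \<Union>P = V"

definition factor_edges :: "'a set set \<Rightarrow> 'a set set" where
  "factor_edges P = {{u, v} | u v. \<exists>B\<in>P. u \<in> B \<and> v \<in> B \<and> u \<noteq> v}"

text \<open>Bipartite construction with parts X and Y = V - X: an edge is red iff it touches X,
  blue iff it lies inside Y.\<close>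
definition red_edge :: "'a set \<Rightarrow> 'a set \<Rightarrow> bool" where
  "red_edge X e \<longleftrightarrow> e \<inter> X \<noteq> {}"

definition blue_edge :: "'a set \<Rightarrow> 'a set \<Rightarrow> bool" where
  "blue_edge X e \<longleftrightarrow> e \<inter> X = {}"

definition max_in_factor :: "nat \<Rightarrow> 'a set \<Rightarrow> ('a set \<Rightarrow> bool) \<Rightarrow> nat" where
  "max_in_factor k V c = Max {card {e \<in> factor_edges P. c e} | P. Kk_factor k V P}"

end

theory Submission
  imports Defs
begin

text \<open>A block B of a K_k-factor containing b = card (B - X) vertices of Y = V - X carries
  b choose 2 blue and (k choose 2) - (b choose 2) red edges, and conversely every sequence
  b_1, ..., b_m with b_i \<le> k and sum card Y (m = card V div k) is realised by some factor.
  Both extremal problems thus reduce to optimising the convex sum of the b_i choose 2: it is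
  largest when Y is packed into full blocks (an exchange argument) and smallest when Y is spread
  evenly (tangent-line bound b choose 2 \<ge> (a choose 2) + a (b - a)).  The red formula is the
  even spread rewritten in terms of \<rho>, using \<lfloor>k \<rho>\<rfloor> = card X div m.\<close>

lemma Kk_factor_block:
  assumes "Kk_factor k V P" "B \<in> P"
  shows "B \<subseteq> V" "card B = k"
  using assms unfolding Kk_factor_def by auto

lemma Kk_factor_disjoint:
  assumes "Kk_factor k V P" "B \<in> P" "C \<in> P" "B \<noteq> C"
  shows "B \<inter> C = {}"
  using assms unfolding Kk_factor_def by auto

lemma finite_Kk_factor:
  assumes "Kk_factor k V P" "finite V"
  shows "finite P"
proof -
  have "P \<subseteq> Pow V" using assms(1) by (auto dest: Kk_factor_block)
  then show ?thesis using assms(2) finite_subset by blast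
qed

lemma finite_Kk_factor_block:
  assumes "Kk_factor k V P" "finite V" "B \<in> P"
  shows "finite B"
  using assms Kk_factor_block(1) finite_subset by metis

lemma card_Diff_sum_Kk_factor:
  assumes F: "Kk_factor k V P" and "finite V"
  shows "(\<Sum>B\<in>P. card (B - X)) = card (V - X)"
proof -
  have "V - X = (\<Union>B\<in>P. B - X)" using F unfolding Kk_factor_def by auto
  moreover have "card (\<Union>B\<in>P. B - X) = (\<Sum>B\<in>P. card (B - X))"
    using assms by (intro card_UN_disjoint)
      (auto intro: finite_Kk_factor finite_Kk_factor_block dest: Kk_factor_disjoint)
  ultimately show ?thesis by simp
qed

lemma card_Kk_factor:
  assumes "Kk_factor k V P" "finite V"
  shows "card P * k = card V"
  using card_Diff_sum_Kk_factor[OF assms, of "{}"] assms(1)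
  by (simp add: Kk_factor_block(2))

lemma card_factor_edges_coloured:
  assumes F: "Kk_factor k V P" and "finite V"
  shows "card {e \<in> factor_edges P. c e} = (\<Sum>B\<in>P. card {e. e \<subseteq> B \<and> card e = 2 \<and> c e})"
proof -
  have "{e \<in> factor_edges P. c e} = (\<Union>B\<in>P. {e. e \<subseteq> B \<and> card e = 2 \<and> c e})"
    unfolding factor_edges_def by (auto simp: card_2_iff)
  moreover have "card (\<Union>B\<in>P. {e. e \<subseteq> B \<and> card e = 2 \<and> c e})
      = (\<Sum>B\<in>P. card {e. e \<subseteq> B \<and> card e = 2 \<and> c e})"
  proof (intro card_UN_disjoint ballI impI)
    show "finite P" using assms by (rule finite_Kk_factor)
    fix B C assume "B \<in> P" "C \<in> P" "B \<noteq> C"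
    then have "B \<inter> C = {}" using F Kk_factor_disjoint by blast
    then show "{e. e \<subseteq> B \<and> card e = 2 \<and> c e} \<inter> {e. e \<subseteq> C \<and> card e = 2 \<and> c e} = {}"
      by (auto simp: card_2_iff)
  next
    fix B assume "B \<in> P"
    then have "finite B" using assms by (rule finite_Kk_factor_block[rotated 2])
    then show "finite {e. e \<subseteq> B \<and> card e = 2 \<and> c e}" by simp
  qed
  ultimately show ?thesis by simp
qed

lemma card_blue_edges_within:
  assumes "finite B"
  shows "card {e. e \<subseteq> B \<and> card e = 2 \<and> blue_edge X e} = card (B - X) choose 2"
proof -
  have "{e. e \<subseteq> B \<and> card e = 2 \<and> blue_edge X e} = {e. e \<subseteq> B - X \<and> card e = 2}"
    unfolding blue_edge_def by auto
  then show ?thesis using n_subsets[of "B - X" 2] assms by simp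
qed

lemma card_red_edges_within:
  assumes "finite B"
  shows "card {e. e \<subseteq> B \<and> card e = 2 \<and> red_edge X e} + (card (B - X) choose 2) = card B choose 2"
proof -
  let ?red = "{e. e \<subseteq> B \<and> card e = 2 \<and> red_edge X e}"
  let ?blue = "{e. e \<subseteq> B \<and> card e = 2 \<and> blue_edge X e}"
  have "{e. e \<subseteq> B \<and> card e = 2} = ?red \<union> ?blue"
    unfolding red_edge_def blue_edge_def by auto
  moreover have "card (?red \<union> ?blue) = card ?red + card ?blue"
    using assms by (intro card_Un_disjoint) (auto simp: red_edge_def blue_edge_def)
  ultimately have "card ?red + card ?blue = card B choose 2"
    using n_subsets[OF assms, of 2] by simp
  then show ?thesis using card_blue_edges_within[OF assms] by simp
qed

lemma card_blue_factor_edges: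
  assumes "Kk_factor k V P" "finite V"
  shows "card {e \<in> factor_edges P. blue_edge X e} = (\<Sum>B\<in>P. card (B - X) choose 2)"
  using assms by (simp add: card_factor_edges_coloured card_blue_edges_within finite_Kk_factor_block)

lemma card_red_factor_edges:
  assumes "Kk_factor k V P" "finite V"
  shows "card {e \<in> factor_edges P. red_edge X e} + (\<Sum>B\<in>P. card (B - X) choose 2)
      = card P * (k choose 2)"
  using assms
  by (simp add: card_factor_edges_coloured finite_Kk_factor_block Kk_factor_block(2)
      card_red_edges_within flip: sum.distrib)

lemma card_Diff_le_Kk_factor:
  assumes "Kk_factor k V P" "finite V" "B \<in> P"
  shows "card (B - X) \<le> k"
  using assms by (metis Kk_factor_block(2) Diff_subset card_mono finite_Kk_factor_block)

lemma Kk_factor_insert: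
  assumes "Kk_factor k V P" "B \<inter> V = {}" "card B = k"
  shows "Kk_factor k (B \<union> V) (insert B P)"
proof -
  have "C \<subseteq> V" if "C \<in> P" for C using assms(1) that by (rule Kk_factor_block)
  then show ?thesis using assms unfolding Kk_factor_def by (auto simp: Int_commute)
qed

lemma obtain_subset_with_card_Diff:
  assumes "finite V" "X \<subseteq> V" "b \<le> card (V - X)" "k \<le> b + card X" "b \<le> k"
  obtains B where "B \<subseteq> V" "card B = k" "card (B - X) = b"
proof -
  obtain Y where Y: "Y \<subseteq> V - X" "card Y = b" "finite Y"
    using assms(3) by (rule obtain_subset_with_card_n)
  have "k - b \<le> card X" using assms(4) by simp
  then obtain Z where Z: "Z \<subseteq> X" "card Z = k - b" "finite Z"
    by (rule obtain_subset_with_card_n)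
  have "Z \<inter> Y = {}" "(Z \<union> Y) - X = Y" using Y(1) Z(1) by auto
  then show ?thesis
    using assms(2,5) Y Z by (intro that[of "Z \<union> Y"]) (auto simp: card_Un_disjoint)
qed

text \<open>The sum over an arbitrary f records that the numbers card (B - X) of the blocks are
  exactly the entries of bs.\<close>
lemma Kk_factor_with_profile:
  assumes "k > 0" "finite V" "X \<subseteq> V" "length bs * k = card V" "sum_list bs = card (V - X)"
    "\<forall>b\<in>set bs. b \<le> k"
  shows "\<exists>P. Kk_factor k V P \<and> (\<Sum>B\<in>P. f (card (B - X))) = sum_list (map f bs)"
  using assms(2-)
proof (induction bs arbitrary: V X)
  case Nil
  then show ?case by (intro exI[of _ "{}"]) (simp add: Kk_factor_def)
next
  case (Cons b bs)
  have "finite X" using Cons.prems(1,2) by (rule finite_subset[rotated])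
  have "sum_list bs \<le> length bs * k"
    using Cons.prems(5) sum_list_mono[of bs "\<lambda>b. b" "\<lambda>_. k"] by (simp add: sum_list_triv)
  moreover have "card (V - X) = card V - card X" "card X \<le> card V"
    using card_Diff_subset[OF \<open>finite X\<close> Cons.prems(2)] card_mono[OF Cons.prems(1,2)] by simp_all
  ultimately have "k \<le> b + card X" using Cons.prems(3,4) by simp
  moreover have "b \<le> card (V - X)" "b \<le> k" using Cons.prems(4,5) by simp_all
  ultimately obtain B0 where B0: "B0 \<subseteq> V" "card B0 = k" "card (B0 - X) = b"
    using obtain_subset_with_card_Diff[OF Cons.prems(1,2)] by blast
  have "(V - B0) - (X - B0) = (V - X) - (B0 - X)" by blast
  moreover have "finite (B0 - X)" "B0 - X \<subseteq> V - X"
    using B0(1) Cons.prems(1) by (auto intro: finite_subset)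
  ultimately have "sum_list bs = card ((V - B0) - (X - B0))"
    using Cons.prems(4) B0(3) by (simp add: card_Diff_subset)
  moreover have "length bs * k = card (V - B0)"
    using Cons.prems(1,3) B0(1,2) by (simp add: card_Diff_subset finite_subset)
  moreover have "finite (V - B0)" "X - B0 \<subseteq> V - B0" "\<forall>b\<in>set bs. b \<le> k"
    using Cons.prems(1,2,5) by auto
  ultimately obtain P where P: "Kk_factor k (V - B0) P"
      "(\<Sum>B\<in>P. f (card (B - (X - B0)))) = sum_list (map f bs)"
    using Cons.IH by blast
  have "B0 \<noteq> {}" using \<open>k > 0\<close> B0(2) by auto
  then have "B0 \<notin> P" using Kk_factor_block(1)[OF P(1)] by blast
  moreover have factor: "Kk_factor k V (insert B0 P)"
    using Kk_factor_insert[OF P(1) _ B0(2)] B0(1) by (simp add: Un_absorb1)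
  moreover have "(\<Sum>B\<in>P. f (card (B - X))) = sum_list (map f bs)"
  proof -
    have "B - X = B - (X - B0)" if "B \<in> P" for B
      using Kk_factor_block(1)[OF P(1) that] by blast
    then show ?thesis unfolding P(2)[symmetric] by (intro sum.cong) simp_all
  qed
  ultimately have "(\<Sum>B\<in>insert B0 P. f (card (B - X))) = sum_list (map f (b # bs))"
    using B0(3) finite_Kk_factor[OF P(1) \<open>finite (V - B0)\<close>] by simp
  with factor show ?case by (intro exI[of _ "insert B0 P"] conjI)
qed

lemma max_in_factor_eqI:
  assumes "\<And>P. Kk_factor k V P \<Longrightarrow> card {e \<in> factor_edges P. c e} \<le> m"
    and "Kk_factor k V P" "card {e \<in> factor_edges P. c e} = m"
  shows "max_in_factor k V c = m"
  unfolding max_in_factor_def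
proof (rule Max_eqI)
  show "finite {card {e \<in> factor_edges P. c e} | P. Kk_factor k V P}"
    using assms(1) by (intro finite_nat_set_iff_bounded_le[THEN iffD2]) blast
qed (use assms in blast)+

lemma of_nat_choose_two: "real (n choose 2) = real n * (real n - 1) / 2"
proof (induction n)
  case (Suc n)
  have "Suc n choose 2 = n + (n choose 2)" by (simp add: numeral_2_eq_2)
  then show ?case using Suc by (simp add: field_simps)
qed simp

lemma div_mod_mult_add:
  fixes q k d :: nat
  assumes "d < k"
  shows "(q * k + d) div k = q" "(q * k + d) mod k = d"
  using assms by simp_all

text \<open>The largest value of the sum of the b_i choose 2 over parts b_i \<le> k summing to y:
  fill parts of size k, leaving one remainder part.\<close>
definition packed_pairs :: "nat \<Rightarrow> nat \<Rightarrow> nat" where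
  "packed_pairs k y = y div k * (k choose 2) + (y mod k choose 2)"

text \<open>The smallest value of the sum of the b_i choose 2 over m parts summing to y:
  y mod m parts of size y div m + 1 and the others of size y div m, using
  (a + 1 choose 2) = (a choose 2) + a.\<close>
definition balanced_pairs :: "nat \<Rightarrow> nat \<Rightarrow> nat" where
  "balanced_pairs m y = m * (y div m choose 2) + y mod m * (y div m)"

lemma packed_pairs_add_le:
  assumes "b \<le> k"
  shows "packed_pairs k y + (b choose 2) \<le> packed_pairs k (y + b)"
proof (cases "k = 0")
  case False
  define q r where "q = y div k" and "r = y mod k"
  have y: "y = q * k + r" and "r < k" using False unfolding q_def r_def by auto
  show ?thesis
  proof (cases "r + b < k")
    case True
    have "real (r choose 2) + real (b choose 2) \<le> real (r + b choose 2)"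
      unfolding of_nat_choose_two by (simp add: field_simps)
    then have "(r choose 2) + (b choose 2) \<le> (r + b choose 2)" by linarith
    moreover have "y + b = q * k + (r + b)" using y by simp
    then have "(y + b) div k = q" "(y + b) mod k = r + b"
      using div_mod_mult_add[OF True, of q] by (simp_all only:)
    ultimately show ?thesis by (simp add: packed_pairs_def q_def r_def)
  next
    case False
    define d where "d = r + b - k"
    have "real (k choose 2) + real (d choose 2) - real (r choose 2) - real (b choose 2)
        = (real k - real r) * (real k - real b)"
      using False unfolding of_nat_choose_two d_def by (simp add: of_nat_diff field_simps)
    moreover have "(real k - real r) * (real k - real b) \<ge> 0" using \<open>r < k\<close> assms by simp
    ultimately have "(r choose 2) + (b choose 2) \<le> (k choose 2) + (d choose 2)" by linarith
    moreover have "y + b = (q + 1) * k + d" "d < k" using y False \<open>r < k\<close> assms unfolding d_def by auto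
    then have "(y + b) div k = q + 1" "(y + b) mod k = d"
      using div_mod_mult_add[of d k "q + 1"] by (simp_all only:)
    ultimately show ?thesis by (simp add: packed_pairs_def q_def r_def)
  qed
qed (use assms in \<open>simp add: packed_pairs_def\<close>)

lemma sum_choose_two_le_packed_pairs:
  assumes "finite S" "\<forall>i\<in>S. b i \<le> k"
  shows "(\<Sum>i\<in>S. b i choose 2) \<le> packed_pairs k (\<Sum>i\<in>S. b i)"
  using assms
proof (induction S rule: finite_induct)
  case (insert i S)
  then have "(\<Sum>i\<in>insert i S. b i choose 2) \<le> packed_pairs k (\<Sum>i\<in>S. b i) + (b i choose 2)"
    by simp
  also have "\<dots> \<le> packed_pairs k ((\<Sum>i\<in>S. b i) + b i)"
    using insert.prems by (simp add: packed_pairs_add_le)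
  finally show ?case using insert.hyps by (simp add: add.commute)
qed (simp add: packed_pairs_def)

lemma choose_two_tangent: "(a choose 2) + a * b \<le> (b choose 2) + a * a"
proof -
  define z where "z = real b - real a"
  have "z * (z - 1) \<ge> 0"
  proof (cases "b \<le> a")
    case True
    then have "z \<le> 0" unfolding z_def by simp
    then show ?thesis by (simp add: mult_nonpos_nonpos)
  next
    case False
    then have "z \<ge> 1" unfolding z_def by simp
    then show ?thesis by simp
  qed
  moreover have "real (b choose 2) + real a * real a - real (a choose 2) - real a * real b = z * (z - 1) / 2"
    unfolding z_def of_nat_choose_two by (simp add: field_simps)
  ultimately have "real (a choose 2) + real a * real b \<le> real (b choose 2) + real a * real a"
    by linarith
  then show ?thesis by (simp only: of_nat_mult [symmetric] of_nat_add [symmetric] of_nat_le_iff)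
qed

lemma balanced_pairs_le_sum_choose_two:
  assumes "finite S"
  shows "balanced_pairs (card S) (\<Sum>i\<in>S. b i) \<le> (\<Sum>i\<in>S. b i choose 2)"
proof -
  define m y where "m = card S" and "y = (\<Sum>i\<in>S. b i)"
  define a r where "a = y div m" and "r = y mod m"
  have y: "y = m * a + r" unfolding a_def r_def by simp
  have "m * (a choose 2) + a * y = (\<Sum>i\<in>S. (a choose 2) + a * b i)"
    unfolding m_def y_def by (simp add: sum.distrib sum_distrib_left)
  also have "\<dots> \<le> (\<Sum>i\<in>S. (b i choose 2) + a * a)"
    by (intro sum_mono choose_two_tangent)
  also have "\<dots> = (\<Sum>i\<in>S. b i choose 2) + m * (a * a)"
    unfolding m_def by (simp add: sum.distrib)
  finally have "m * (a choose 2) + r * a \<le> (\<Sum>i\<in>S. b i choose 2)"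
    unfolding y by (simp add: algebra_simps)
  then show ?thesis unfolding balanced_pairs_def m_def a_def r_def y_def .
qed

lemma packed_pairs_approx:
  assumes "k > 0"
  shows "\<bar>real (packed_pairs k y) - (real k - 1) / 2 * real y\<bar> \<le> real k * real k"
proof -
  define q r where "q = y div k" and "r = y mod k"
  have y: "real y = real q * real k + real r" and "r < k"
    using assms unfolding q_def r_def by (simp_all flip: of_nat_mult of_nat_add)
  have "real (packed_pairs k y) - (real k - 1) / 2 * real y = - (real r * (real k - real r) / 2)"
    unfolding packed_pairs_def q_def[symmetric] r_def[symmetric] y
    by (simp add: of_nat_choose_two field_simps)
  moreover have "0 \<le> real r * (real k - real r)" "real r * (real k - real r) \<le> real k * real k"
    using \<open>r < k\<close> by (simp_all add: mult_mono)
  ultimately show ?thesis by simp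
qed

lemma packed_profile:
  assumes "k > 0" "y \<le> m * k"
  obtains bs where "length bs = m" "sum_list bs = y" "\<forall>b\<in>set bs. b \<le> k"
    "sum_list (map (\<lambda>b. b choose 2) bs) = packed_pairs k y"
proof -
  define q r where "q = y div k" and "r = y mod k"
  have y: "y = q * k + r" and "r < k" using assms(1) unfolding q_def r_def by auto
  show ?thesis
  proof (cases "r = 0")
    case True
    then have "q \<le> m" using assms y by simp
    then show ?thesis
      using True y assms(1) by (intro that[of "replicate q k @ replicate (m - q) 0"])
        (auto simp: sum_list_replicate packed_pairs_def q_def[symmetric] r_def[symmetric])
  next
    case False
    then have "q * k < m * k" using assms(2) y by linarith
    then have "q < m" by simp
    then show ?thesis
      using False y \<open>r < k\<close>
      by (intro that[of "replicate q k @ r # replicate (m - q - 1) 0"])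
        (auto simp: sum_list_replicate packed_pairs_def q_def[symmetric] r_def[symmetric])
  qed
qed

lemma balanced_profile:
  assumes "y \<le> m * k"
  obtains bs where "length bs = m" "sum_list bs = y" "\<forall>b\<in>set bs. b \<le> k"
    "sum_list (map (\<lambda>b. b choose 2) bs) = balanced_pairs m y"
proof -
  define a r where "a = y div m" and "r = y mod m"
  have y: "y = m * a + r" unfolding a_def r_def by simp
  have "r \<le> m" using assms unfolding r_def by (cases "m = 0") simp_all
  have "m * a \<le> m * k" using assms y by linarith
  then have "a \<le> k" if "m > 0" using that by simp
  moreover have "a < k" if "r > 0"
  proof -
    have "m * a < m * k" using assms y that by linarith
    then show ?thesis by simp
  qed
  moreover have "balanced_pairs m y = m * (a choose 2) + r * a"
    unfolding balanced_pairs_def a_def r_def ..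
  ultimately show ?thesis
    using y \<open>r \<le> m\<close> by (intro that[of "replicate r (a + 1) @ replicate (m - r) a"])
      (auto simp: sum_list_replicate numeral_2_eq_2 algebra_simps)
qed

lemma max_blue_in_factor:
  assumes "k > 0" "finite V" "k dvd card V" "X \<subseteq> V"
  shows "max_in_factor k V (blue_edge X) = packed_pairs k (card (V - X))"
proof -
  have "card (V - X) \<le> card V div k * k" using assms(2,3) by (simp add: card_mono)
  with assms(1) obtain bs where bs: "length bs = card V div k" "sum_list bs = card (V - X)"
      "\<forall>b\<in>set bs. b \<le> k" "sum_list (map (\<lambda>b. b choose 2) bs) = packed_pairs k (card (V - X))"
    by (rule packed_profile)
  have "length bs * k = card V" using bs(1) assms(3) by simp
  from Kk_factor_with_profile[OF assms(1,2,4) this bs(2,3), of "\<lambda>b. b choose 2"]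
  obtain P where P: "Kk_factor k V P"
      "(\<Sum>B\<in>P. card (B - X) choose 2) = packed_pairs k (card (V - X))"
    unfolding bs(4) by blast
  show ?thesis
  proof (rule max_in_factor_eqI)
    fix P' assume P': "Kk_factor k V P'"
    have "(\<Sum>B\<in>P'. card (B - X) choose 2) \<le> packed_pairs k (\<Sum>B\<in>P'. card (B - X))"
      using P' assms(2)
      by (intro sum_choose_two_le_packed_pairs) (auto intro: finite_Kk_factor card_Diff_le_Kk_factor)
    then show "card {e \<in> factor_edges P'. blue_edge X e} \<le> packed_pairs k (card (V - X))"
      using P' assms(2) by (simp add: card_blue_factor_edges card_Diff_sum_Kk_factor)
  qed (use P assms(2) in \<open>auto simp: card_blue_factor_edges\<close>)
qed

lemma max_red_in_factor:
  assumes "k > 0" "finite V" "k dvd card V" "X \<subseteq> V"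
  shows "max_in_factor k V (red_edge X) + balanced_pairs (card V div k) (card (V - X))
    = card V div k * (k choose 2)"
proof -
  define m where "m = card V div k"
  have card_P: "card P = m" if "Kk_factor k V P" for P
    using card_Kk_factor[OF that assms(2)] assms(1) unfolding m_def by (metis div_mult_self_is_m)
  have "m * k = card V" using assms(3) unfolding m_def by simp
  then have "card (V - X) \<le> m * k" using assms(2) by (simp add: card_mono)
  then obtain bs where bs: "length bs = m" "sum_list bs = card (V - X)" "\<forall>b\<in>set bs. b \<le> k"
      "sum_list (map (\<lambda>b. b choose 2) bs) = balanced_pairs m (card (V - X))"
    by (rule balanced_profile)
  have "length bs * k = card V" using bs(1) \<open>m * k = card V\<close> by simp
  from Kk_factor_with_profile[OF assms(1,2,4) this bs(2,3), of "\<lambda>b. b choose 2"]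
  obtain P where P: "Kk_factor k V P"
      "(\<Sum>B\<in>P. card (B - X) choose 2) = balanced_pairs m (card (V - X))"
    unfolding bs(4) by blast
  have red_P: "card {e \<in> factor_edges P. red_edge X e} + balanced_pairs m (card (V - X)) = m * (k choose 2)"
    using card_red_factor_edges[OF P(1) assms(2), where X = X] P(2) card_P[OF P(1)] by simp
  have "max_in_factor k V (red_edge X) = card {e \<in> factor_edges P. red_edge X e}"
  proof (rule max_in_factor_eqI[OF _ P(1) refl])
    fix P' assume P': "Kk_factor k V P'"
    have "balanced_pairs (card P') (\<Sum>B\<in>P'. card (B - X)) \<le> (\<Sum>B\<in>P'. card (B - X) choose 2)"
      using P' assms(2) by (intro balanced_pairs_le_sum_choose_two finite_Kk_factor)
    then have "balanced_pairs m (card (V - X)) \<le> (\<Sum>B\<in>P'. card (B - X) choose 2)"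
      using P' assms(2) by (simp add: card_P card_Diff_sum_Kk_factor)
    then show "card {e \<in> factor_edges P'. red_edge X e} \<le> card {e \<in> factor_edges P. red_edge X e}"
      using card_red_factor_edges[OF P' assms(2), where X = X] red_P unfolding card_P[OF P'] by linarith
  qed
  then show ?thesis using red_P unfolding m_def by simp
qed

lemma of_nat_balanced_pairs_complement:
  assumes "s < m" "m * t + s \<le> m * k"
  shows "real (balanced_pairs m (m * k - (m * t + s)))
    = (real k - real t - 1) * (real m * (real k - real t) / 2 - real s)"
proof (cases "s = 0")
  case True
  have "m * t \<le> m * k" using assms(2) by linarith
  then have "t \<le> k" using assms(1) by simp
  moreover have "m * k - (m * t + s) = m * (k - t)" using True by (simp add: diff_mult_distrib2)
  ultimately show ?thesis
    using True assms(1) by (simp add: balanced_pairs_def of_nat_choose_two of_nat_diff field_simps)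
next
  case False
  then have "m * t < m * k" using assms(2) by linarith
  then have "t < k" by simp
  then obtain j where k: "k = Suc (t + j)" using less_iff_Suc_add by auto
  then have "m * k - (m * t + s) = j * m + (m - s)" using assms(1) by (simp add: algebra_simps)
  moreover have "m - s < m" using False assms(1) by simp
  ultimately have "balanced_pairs m (m * k - (m * t + s)) = m * (j choose 2) + (m - s) * j"
    using div_mod_mult_add[of "m - s" m j] unfolding balanced_pairs_def by simp
  then show ?thesis
    using assms(1) k by (simp add: of_nat_choose_two of_nat_diff field_simps)
qed

lemma balanced_pairs_complement_closed_form:
  fixes m k x :: nat and \<rho> :: real
  assumes "x \<le> m * k" "real x = \<rho> * (real m * real k)"
  shows "real (m * (k choose 2)) - real (balanced_pairs m (m * k - x))
    = ((real k - 1) / 2 - (real k - real_of_int \<lfloor>real k * \<rho>\<rfloor> - 1) / 2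
        * (real_of_int \<lfloor>real k * \<rho>\<rfloor> / real k + 1 - 2 * \<rho>)) * (real m * real k)"
proof (cases "m = 0 \<or> k = 0")
  case True
  then show ?thesis using assms(1) by (auto simp: balanced_pairs_def)
next
  case False
  define t s where "t = x div m" and "s = x mod m"
  have x: "x = m * t + s" "s < m" using False unfolding t_def s_def by auto
  have "real k * \<rho> = real x / real m" using assms(2) False by (simp add: field_simps)
  then have floor: "\<lfloor>real k * \<rho>\<rfloor> = int t" unfolding t_def by (simp add: floor_divide_of_nat_eq)
  have \<rho>: "\<rho> = (real m * real t + real s) / (real m * real k)"
    using assms(2) False x(1) by (simp add: field_simps)
  have balanced: "real (balanced_pairs m (m * k - x))
      = (real k - real t - 1) * (real m * (real k - real t) / 2 - real s)"
    using of_nat_balanced_pairs_complement[OF x(2)] assms(1) unfolding x(1) by simp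
  show ?thesis
    unfolding floor balanced unfolding \<rho> using False by (simp add: of_nat_choose_two field_simps)
qed

lemma real_max_red_in_factor:
  assumes "k > 0" "finite V" "k dvd card V" "X \<subseteq> V" "real (card X) = \<rho> * real (card V)"
  shows "real (max_in_factor k V (red_edge X))
      = ((real k - 1) / 2 - (real k - real_of_int \<lfloor>real k * \<rho>\<rfloor> - 1) / 2
          * (real_of_int \<lfloor>real k * \<rho>\<rfloor> / real k + 1 - 2 * \<rho>)) * real (card V)"
proof -
  define m where "m = card V div k"
  have V: "card V = m * k" using assms(3) unfolding m_def by simp
  have "card X \<le> m * k" using card_mono[OF assms(2,4)] V by simp
  moreover have "card (V - X) = m * k - card X"
    using assms(2,4) V by (simp add: card_Diff_subset finite_subset)
  moreover have "max_in_factor k V (red_edge X) + balanced_pairs m (card (V - X)) = m * (k choose 2)"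
    using max_red_in_factor[OF assms(1-4)] unfolding m_def .
  then have "real (max_in_factor k V (red_edge X))
      = real (m * (k choose 2)) - real (balanced_pairs m (card (V - X)))"
    by (metis add_diff_cancel_right' of_nat_add)
  ultimately show ?thesis
    using balanced_pairs_complement_closed_form[of "card X" m k \<rho>] assms(5) V by simp
qed

lemma max_blue_in_factor_approx:
  assumes "k > 0" "finite V" "k dvd card V" "X \<subseteq> V" "real (card X) = \<rho> * real (card V)"
  shows "\<bar>real (max_in_factor k V (blue_edge X)) - (real k - 1) / 2 * (1 - \<rho>) * real (card V)\<bar>
    \<le> real k * real k"
proof -
  have "(1 - \<rho>) * real (card V) = real (card (V - X))"
    using assms(2,4,5) by (simp add: card_Diff_subset finite_subset card_mono of_nat_diff algebra_simps)
  then show ?thesis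
    using packed_pairs_approx[OF assms(1), of "card (V - X)"]
    unfolding max_blue_in_factor[OF assms(1-4)] mult.assoc by simp
qed

theorem lemma3p3:
  fixes k :: nat
  assumes "k \<ge> 2"
  shows "(\<forall>(V::'a set) X (\<rho>::real).
            finite V \<and> k dvd card V \<and> X \<subseteq> V \<and> real (card X) = \<rho> * real (card V) \<longrightarrow>
              max_in_factor k V (blue_edge X)
                = (card (V - X) div k) * (k choose 2) + ((card (V - X) mod k) choose 2)
            \<and> real (max_in_factor k V (red_edge X))
                = ((real k - 1) / 2
                   - (real k - real_of_int \<lfloor>real k * \<rho>\<rfloor> - 1) / 2
                     * (real_of_int \<lfloor>real k * \<rho>\<rfloor> / real k + 1 - 2 * \<rho>)) * real (card V))
         \<and> (\<exists>C::real. \<forall>(V::'a set) X (\<rho>::real).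
            finite V \<and> k dvd card V \<and> X \<subseteq> V \<and> real (card X) = \<rho> * real (card V) \<longrightarrow>
              \<bar>real (max_in_factor k V (blue_edge X)) - (real k - 1) / 2 * (1 - \<rho>) * real (card V)\<bar> \<le> C)"
proof -
  have "k > 0" using assms by simp
  show ?thesis
    by (intro conjI exI[of _ "real k * real k"] allI impI; elim conjE;
        rule max_blue_in_factor[OF \<open>k > 0\<close>, unfolded packed_pairs_def]
          real_max_red_in_factor[OF \<open>k > 0\<close>] max_blue_in_factor_approx[OF \<open>k > 0\<close>];
        assumption)
qed

end
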